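(* (a) $P_4$ divides $Q_5$. (b) $P_4$ divides $Q_7$. (c) $P_8$ divides $Q_9$. (d) $P_8$ divides $Q_{11}$.
   Context: $Q_q$ denotes the $q$-dimensional hypercube graph (vertices are $q$-tuples of $0$'s and $1$'s, adjacent iff they differ in exactly one coordinate). $P_m$ denotes the path with $m$ edges. For graphs $H$ and $G$, "$H$ divides $G$" means there is a collection of subgraphs $H_i$ of $G$, each isomorphic to $H$, such that $E(G)$ is the disjoint union of the edge sets $E(H_i)$. *)

theory Defs
  imports Main
begin

type_synonym 'a graph = "'a set \<times> 'a set set"

definition verts :: "'a graph \<Rightarrow> 'a set" where "verts G = fst G"
definition edges :: "'a graph \<Rightarrow> 'a set set" where "edges G = snd G"

definition simple_graph :: "'a graph \<Rightarrow> bool" where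
  "simple_graph G \<longleftrightarrow> (\<forall>e\<in>edges G. e \<subseteq> verts G \<and> card e = 2)"

definition subgraph :: "'a graph \<Rightarrow> 'a graph \<Rightarrow> bool" where
  "subgraph H G \<longleftrightarrow> simple_graph H \<and> verts H \<subseteq> verts G \<and> edges H \<subseteq> edges G"

definition graph_iso :: "'a graph \<Rightarrow> 'b graph \<Rightarrow> bool" where
  "graph_iso G H \<longleftrightarrow> (\<exists>f. bij_betw f (verts G) (verts H) \<and>
      (\<forall>x\<in>verts G. \<forall>y\<in>verts G. {x, y} \<in> edges G \<longleftrightarrow> {f x, f y} \<in> edges H))"

definition graph_divides :: "'a graph \<Rightarrow> 'b graph \<Rightarrow> bool" where
  "graph_divides H G \<longleftrightarrow> (\<exists>\<H> :: 'b graph set.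
      (\<forall>K\<in>\<H>. subgraph K G \<and> graph_iso H K) \<and>
      (\<forall>K1\<in>\<H>. \<forall>K2\<in>\<H>. K1 \<noteq> K2 \<longrightarrow> edges K1 \<inter> edges K2 = {}) \<and>
      \<Union>(edges ` \<H>) = edges G)"

definition hamming :: "bool list \<Rightarrow> bool list \<Rightarrow> nat" where
  "hamming u v = card {i. i < length u \<and> u ! i \<noteq> v ! i}"

definition hypercube :: "nat \<Rightarrow> bool list graph" where
  "hypercube q = ({xs. length xs = q},
     {{u, v} | u v. length u = q \<and> length v = q \<and> hamming u v = 1})"

definition path_graph :: "nat \<Rightarrow> nat graph" where
  "path_graph m = ({0..m}, {{i, Suc i} | i. i < m})"

end

theory Submission
  imports Defs
begin

text \<open>Identify \<open>F_2^m\<close> with the naturals below \<open>2^m\<close> under \<open>xor\<close> and fix nonzero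
\<open>c_0, \<dots>, c_(q-1)\<close> in it. The syndrome \<open>s(v) = xor {c_d | v_d}\<close> of a vertex of \<open>Q_q\<close>
changes by \<open>c_d\<close> when coordinate \<open>d\<close> is flipped, so \<open>s\<close> maps \<open>Q_q\<close> to the Cayley graph of
\<open>F_2^m\<close> with generators \<open>c_d\<close>, whose edges we label by their direction \<open>d\<close>. A walk of
length \<open>k\<close> in distinct directions in the Cayley graph lifts, from every vertex with the
starting syndrome, to a copy of \<open>P_k\<close> in \<open>Q_q\<close>. Every hypercube edge lies on the lift of the
labelled Cayley edge below it, and two lifts through it coincide, since \<open>c_d \<noteq> 0\<close> fixes the
direction in which they traverse it. Hence a family of such walks using every labelled Cayley
edge exactly once yields a \<open>P_k\<close>-decomposition of \<open>Q_q\<close>; the four cases are settled by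
explicit families of walks.\<close>

definition flip :: "bool list \<Rightarrow> nat \<Rightarrow> bool list" where
  "flip v d = v[d := \<not> v ! d]"

definition walk :: "bool list \<Rightarrow> nat list \<Rightarrow> nat \<Rightarrow> bool list" where
  "walk v ds i = foldl flip v (take i ds)"

definition mapped_path :: "(nat \<Rightarrow> 'a) \<Rightarrow> nat \<Rightarrow> 'a graph" where
  "mapped_path f k = (f ` {0..k}, {{f i, f (Suc i)} | i. i < k})"

lemma length_flip [simp]: "length (flip v d) = length v"
  by (simp add: flip_def)

lemma nth_flip: "p < length v \<Longrightarrow> flip v d ! p = (if p = d then \<not> v ! p else v ! p)"
  by (simp add: flip_def nth_list_update)

lemma flip_flip [simp]: "flip (flip v d) d = v"
  by (cases "d < length v") (simp_all add: flip_def list_update_beyond)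

lemma flip_inj: "d < length v \<Longrightarrow> flip v d = flip v d' \<Longrightarrow> d = d'"
  by (metis nth_flip)

lemma flip_neq: "d < length v \<Longrightarrow> flip v d \<noteq> v"
  by (metis nth_flip)

lemma flip_edges_eq_imp_eq:
  assumes "{x, flip x d} = {y, flip y d'}" "d < length x" "length y = length x"
  shows "d = d'"
  using assms doubleton_eq_iff[of x "flip x d" y "flip y d'"]
  by (metis flip_flip flip_inj length_flip)

lemma hamming_flip: "d < length u \<Longrightarrow> hamming u (flip u d) = 1"
proof -
  assume "d < length u"
  then have "{i. i < length u \<and> u ! i \<noteq> flip u d ! i} = {d}"
    by (auto simp: nth_flip split: if_splits)
  then show ?thesis by (simp add: hamming_def)
qed

lemma hamming_eq_1_imp_flip:
  assumes "length w = length u" "hamming u w = 1"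
  obtains d where "d < length u" "w = flip u d"
proof -
  from assms(2) obtain d where diff: "{i. i < length u \<and> u ! i \<noteq> w ! i} = {d}"
    by (auto simp: hamming_def card_1_singleton_iff)
  have "w = flip u d"
    by (rule nth_equalityI) (use diff assms(1) in \<open>auto simp: nth_flip\<close>)
  with diff that show thesis by blast
qed

lemma length_walk [simp]: "length (walk v ds i) = length v"
  by (induction ds arbitrary: v i) (auto simp: walk_def take_Cons')

lemma walk_Suc: "i < length ds \<Longrightarrow> walk v ds (Suc i) = flip (walk v ds i) (ds ! i)"
  by (simp add: walk_def take_Suc_conv_app_nth)

lemma nth_foldl_flip:
  "distinct ds \<Longrightarrow> p < length v \<Longrightarrow> foldl flip v ds ! p = (v ! p \<noteq> (p \<in> set ds))"
  by (induction ds arbitrary: v) (auto simp: nth_flip)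

lemma nth_walk:
  "distinct ds \<Longrightarrow> p < length v \<Longrightarrow> walk v ds i ! p = (v ! p \<noteq> (p \<in> set (take i ds)))"
  by (simp add: walk_def nth_foldl_flip)

lemma walk_walk [simp]: "distinct ds \<Longrightarrow> walk (walk v ds i) ds i = v"
  by (rule nth_equalityI) (auto simp: nth_walk)

lemma walk_neq:
  assumes "distinct ds" "set ds \<subseteq> {..<length v}" "i < j" "j \<le> length ds"
  shows "walk v ds i \<noteq> walk v ds j"
proof
  assume eq: "walk v ds i = walk v ds j"
  have "ds ! i \<in> set (take j ds)"
    using assms(3,4) by (metis in_set_conv_nth length_take min.absorb2 nth_take)
  moreover have "ds ! i \<notin> set (take i ds)"
  proof -
    have "ds ! i \<in> set (drop i ds)"
      using assms(3,4) by (simp add: Cons_nth_drop_Suc[symmetric])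
    then show ?thesis
      using set_take_disj_set_drop_if_distinct[OF assms(1), of i i] by blast
  qed
  moreover have "ds ! i < length v"
    using assms(2-4) nth_mem[of i ds] by fastforce
  ultimately show False
    using arg_cong[OF eq, of "\<lambda>w. w ! (ds ! i)"] by (simp add: nth_walk assms(1))
qed

lemma inj_on_walk:
  assumes "distinct ds" "set ds \<subseteq> {..<length v}"
  shows "inj_on (walk v ds) {0..length ds}"
  by (rule inj_onI) (metis atLeastAtMost_iff linorder_neqE_nat walk_neq[OF assms])

lemma verts_mapped_path [simp]: "verts (mapped_path f k) = f ` {0..k}"
  by (simp add: mapped_path_def verts_def)

lemma edges_mapped_path [simp]: "edges (mapped_path f k) = {{f i, f (Suc i)} | i. i < k}"
  by (simp add: mapped_path_def edges_def)

lemma verts_path_graph [simp]: "verts (path_graph k) = {0..k}"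
  by (simp add: path_graph_def verts_def)

lemma edges_path_graph [simp]: "edges (path_graph k) = {{i, Suc i} | i. i < k}"
  by (simp add: path_graph_def edges_def)

lemma verts_hypercube [simp]: "verts (hypercube q) = {xs. length xs = q}"
  by (simp add: hypercube_def verts_def)

lemma edges_hypercube [simp]:
  "edges (hypercube q) = {{u, v} | u v. length u = q \<and> length v = q \<and> hamming u v = 1}"
  by (simp add: hypercube_def edges_def)

lemma graph_iso_path_graph_mapped_path:
  assumes inj: "inj_on f {0..k}"
  shows "graph_iso (path_graph k) (mapped_path f k)"
  unfolding graph_iso_def
proof (intro exI conjI ballI)
  show "bij_betw f (verts (path_graph k)) (verts (mapped_path f k))"
    using inj by (simp add: bij_betw_def)
  fix x y assume "x \<in> verts (path_graph k)" "y \<in> verts (path_graph k)"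
  then have xy: "x \<in> {0..k}" "y \<in> {0..k}" by simp_all
  have "{f x, f y} = {f i, f (Suc i)} \<longleftrightarrow> {x, y} = {i, Suc i}" if "i < k" for i
    using inj xy that by (auto simp: doubleton_eq_iff inj_on_eq_iff)
  then show "{x, y} \<in> edges (path_graph k) \<longleftrightarrow> {f x, f y} \<in> edges (mapped_path f k)"
    by auto
qed

lemma subgraph_hypercube_walk:
  assumes "length v = q" "distinct ds" "set ds \<subseteq> {..<q}"
  shows "subgraph (mapped_path (walk v ds) (length ds)) (hypercube q)"
proof -
  have "e \<in> edges (hypercube q) \<and> card e = 2 \<and> e \<subseteq> verts (mapped_path (walk v ds) (length ds))"
    if "e \<in> edges (mapped_path (walk v ds) (length ds))" for e
  proof -
    from that obtain i where i: "i < length ds"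
      and e: "e = {walk v ds i, flip (walk v ds i) (ds ! i)}"
      by (auto simp: walk_Suc)
    have d: "ds ! i < length (walk v ds i)"
      using assms i nth_mem[of i ds] by fastforce
    have "length (walk v ds i) = q" "length (flip (walk v ds i) (ds ! i)) = q"
      using assms(1) by simp_all
    then have "e \<in> edges (hypercube q)"
      using hamming_flip[OF d] unfolding e edges_hypercube by blast
    moreover have "card e = 2"
      using flip_neq[OF d] by (simp add: e)
    ultimately show ?thesis
      using i by (auto simp: e walk_Suc[symmetric])
  qed
  then show ?thesis
    using assms(1) unfolding subgraph_def simple_graph_def by auto
qed

fun syndrome :: "nat list \<Rightarrow> bool list \<Rightarrow> nat" where
  "syndrome (c # cs) (b # bs) = (if b then xor c (syndrome cs bs) else syndrome cs bs)"
| "syndrome _ _ = 0"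

definition cayley_walk :: "nat list \<Rightarrow> nat \<Rightarrow> nat list \<Rightarrow> nat \<Rightarrow> nat" where
  "cayley_walk cols \<sigma> ds i = foldl (\<lambda>\<tau> d. xor \<tau> (cols ! d)) \<sigma> (take i ds)"

lemma xor_cancel_left [simp]: "xor a (xor a b) = b"
  for a b :: "'a::semiring_bit_operations"
  by (simp add: xor.assoc[symmetric])

lemma xor_eq_left_iff [simp]: "xor a b = a \<longleftrightarrow> b = 0"
  for a b :: "'a::semiring_bit_operations"
  by (metis xor_cancel_left xor_self_eq xor.comm_neutral)

lemma syndrome_flip:
  "length v = length cols \<Longrightarrow> d < length v \<Longrightarrow>
    syndrome cols (flip v d) = xor (syndrome cols v) (cols ! d)"
proof (induction cols arbitrary: v d)
  case (Cons c cs)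
  then obtain b bs where v: "v = b # bs" by (cases v) auto
  show ?case
    using Cons v by (cases d) (auto simp: flip_def xor.assoc xor.commute xor.left_commute)
qed simp

lemma syndrome_less: "\<forall>c\<in>set cols. c < 2 ^ m \<Longrightarrow> syndrome cols v < 2 ^ m"
  by (induction cols v rule: syndrome.induct)
    (auto simp: take_bit_nat_eq_self_iff[symmetric] take_bit_xor)

lemma syndrome_foldl_flip:
  "length v = length cols \<Longrightarrow> set ds \<subseteq> {..<length cols} \<Longrightarrow>
    syndrome cols (foldl flip v ds) = foldl (\<lambda>\<tau> d. xor \<tau> (cols ! d)) (syndrome cols v) ds"
  by (induction ds arbitrary: v) (auto simp: syndrome_flip)

lemma syndrome_walk:
  "length v = length cols \<Longrightarrow> set ds \<subseteq> {..<length cols} \<Longrightarrow>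
    syndrome cols (walk v ds i) = cayley_walk cols (syndrome cols v) ds i"
  unfolding walk_def cayley_walk_def
  by (rule syndrome_foldl_flip) (auto dest: in_set_takeD)

lemma foldl_xor_shift:
  "foldl (\<lambda>\<tau> d. xor \<tau> (f d)) (xor a b) ds = xor a (foldl (\<lambda>\<tau> d. xor \<tau> (f d)) b ds)"
  for a b :: "'a::semiring_bit_operations"
  by (induction ds arbitrary: b) (simp_all add: xor.assoc)

lemma cayley_walk_cayley_walk [simp]: "cayley_walk cols (cayley_walk cols \<sigma> ds i) ds i = \<sigma>"
proof -
  let ?f = "\<lambda>\<tau> d. xor \<tau> (cols ! d)"
  have shift: "foldl ?f a (take i ds) = xor a (foldl ?f 0 (take i ds))" for a
    using foldl_xor_shift[of "\<lambda>d. cols ! d" a 0 "take i ds"] by simp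
  have "foldl ?f (foldl ?f \<sigma> (take i ds)) (take i ds)
      = xor (foldl ?f \<sigma> (take i ds)) (foldl ?f 0 (take i ds))"
    by (rule shift)
  also have "\<dots> = \<sigma>"
    using shift[of \<sigma>] by (simp add: xor.assoc)
  finally show ?thesis
    by (simp add: cayley_walk_def)
qed

text \<open>A walk in the Cayley graph is given by its starting vertex and the directions of its steps;
an edge of the Cayley graph is recorded as its direction together with its set of endpoints.\<close>

type_synonym pattern = "nat \<times> nat list"

fun step_label :: "nat list \<Rightarrow> pattern \<times> nat \<Rightarrow> nat \<times> nat set" where
  "step_label cols ((\<sigma>, ds), i) =
     (ds ! i, {cayley_walk cols \<sigma> ds i, cayley_walk cols \<sigma> ds (Suc i)})"

definition steps :: "pattern list \<Rightarrow> (pattern \<times> nat) set" where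
  "steps W = (SIGMA p:set W. {..<length (snd p)})"

definition cayley_edges :: "nat list \<Rightarrow> nat \<Rightarrow> (nat \<times> nat set) set" where
  "cayley_edges cols m = {(d, {\<sigma>, xor \<sigma> (cols ! d)}) | d \<sigma>. d < length cols \<and> \<sigma> < 2 ^ m}"

locale path_lifting =
  fixes cols :: "nat list" and m k :: nat and W :: "pattern list"
  assumes cols_nonzero: "c \<in> set cols \<Longrightarrow> c \<noteq> 0"
    and cols_less: "c \<in> set cols \<Longrightarrow> c < 2 ^ m"
    and length_pattern: "(\<sigma>, ds) \<in> set W \<Longrightarrow> length ds = k"
    and distinct_pattern: "(\<sigma>, ds) \<in> set W \<Longrightarrow> distinct ds"
    and pattern_less: "(\<sigma>, ds) \<in> set W \<Longrightarrow> set ds \<subseteq> {..<length cols}"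
    and inj_on_step_label: "inj_on (step_label cols) (steps W)"
    and cayley_edges_subset: "cayley_edges cols m \<subseteq> step_label cols ` steps W"
begin

definition lifts :: "bool list graph set" where
  "lifts = {mapped_path (walk v ds) (length ds) | v \<sigma> ds.
      (\<sigma>, ds) \<in> set W \<and> length v = length cols \<and> syndrome cols v = \<sigma>}"

lemma step_label_lift:
  assumes "(\<sigma>, ds) \<in> set W" "length v = length cols" "syndrome cols v = \<sigma>" "i < length ds"
  shows "step_label cols ((\<sigma>, ds), i) = (ds ! i, syndrome cols ` {walk v ds i, walk v ds (Suc i)})"
  using assms pattern_less by (simp add: syndrome_walk)

lemma shared_edge_imp_same_lift:
  assumes pat: "(\<sigma>, ds) \<in> set W" "length v = length cols" "syndrome cols v = \<sigma>" "i < length ds"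
    and pat': "(\<sigma>', ds') \<in> set W" "length v' = length cols" "syndrome cols v' = \<sigma>'" "j < length ds'"
    and edge: "{walk v ds i, walk v ds (Suc i)} = {walk v' ds' j, walk v' ds' (Suc j)}"
  shows "v = v' \<and> ds = ds'"
proof -
  define x x' d d' where "x = walk v ds i" "x' = walk v' ds' j" "d = ds ! i" "d' = ds' ! j"
  have d_less: "d < length cols" "d' < length cols"
    using pat(1,4) pat'(1,4) pattern_less nth_mem unfolding x_x'_d_d'_def by blast+
  have flips: "walk v ds (Suc i) = flip x d" "walk v' ds' (Suc j) = flip x' d'"
    using pat(4) pat'(4) by (simp_all add: walk_Suc x_x'_d_d'_def)
  have edge': "{x, flip x d} = {x', flip x' d'}"
    using edge flips by (simp add: x_x'_d_d'_def)
  have "d = d'"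
    using flip_edges_eq_imp_eq[OF edge'] d_less pat(2) pat'(2) by (simp add: x_x'_d_d'_def)
  then have "step_label cols ((\<sigma>, ds), i) = step_label cols ((\<sigma>', ds'), j)"
    using step_label_lift[OF pat] step_label_lift[OF pat'] edge by (simp add: x_x'_d_d'_def)
  moreover have "((\<sigma>, ds), i) \<in> steps W" "((\<sigma>', ds'), j) \<in> steps W"
    using pat(1,4) pat'(1,4) by (simp_all add: steps_def)
  ultimately have same_step: "\<sigma>' = \<sigma>" "ds' = ds" "j = i"
    using inj_onD[OF inj_on_step_label] by blast+
  have "x = x'"
  proof (rule ccontr)
    assume "x \<noteq> x'"
    with edge' have swapped: "x = flip x' d"
      by (auto simp: doubleton_eq_iff \<open>d = d'\<close>)
    have "syndrome cols x = syndrome cols x'"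
      using pat pat' same_step pattern_less by (simp add: x_x'_d_d'_def syndrome_walk)
    then have "cols ! d = 0"
      using swapped syndrome_flip[of x' cols d] d_less pat'(2) by (simp add: x_x'_d_d'_def)
    then show False
      using cols_nonzero d_less(1) nth_mem by blast
  qed
  then show ?thesis
    using same_step distinct_pattern[OF pat(1)] walk_walk by (metis x_x'_d_d'_def(1,2))
qed

lemma lift_subgraph_iso:
  assumes "K \<in> lifts"
  shows "subgraph K (hypercube (length cols)) \<and> graph_iso (path_graph k) K"
proof -
  from assms obtain v \<sigma> ds where K: "K = mapped_path (walk v ds) (length ds)"
    and pat: "(\<sigma>, ds) \<in> set W" and v: "length v = length cols"
    unfolding lifts_def by blast
  show ?thesis
    using subgraph_hypercube_walk[OF v distinct_pattern[OF pat] pattern_less[OF pat]]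
      graph_iso_path_graph_mapped_path[OF inj_on_walk[OF distinct_pattern[OF pat]]]
      pattern_less[OF pat] length_pattern[OF pat] K v
    by simp
qed

lemma lifts_edge_disjoint:
  assumes "K \<in> lifts" "K' \<in> lifts" "K \<noteq> K'"
  shows "edges K \<inter> edges K' = {}"
proof (rule ccontr)
  assume "edges K \<inter> edges K' \<noteq> {}"
  then obtain e where e: "e \<in> edges K" "e \<in> edges K'" by blast
  from assms(1) obtain v \<sigma> ds where K: "K = mapped_path (walk v ds) (length ds)"
    and pat: "(\<sigma>, ds) \<in> set W" "length v = length cols" "syndrome cols v = \<sigma>"
    unfolding lifts_def by blast
  from assms(2) obtain v' \<sigma>' ds' where K': "K' = mapped_path (walk v' ds') (length ds')"
    and pat': "(\<sigma>', ds') \<in> set W" "length v' = length cols" "syndrome cols v' = \<sigma>'"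
    unfolding lifts_def by blast
  obtain i j where "i < length ds" "j < length ds'"
    and "{walk v ds i, walk v ds (Suc i)} = {walk v' ds' j, walk v' ds' (Suc j)}"
    using e K K' by auto
  then have "v = v' \<and> ds = ds'"
    using shared_edge_imp_same_lift pat pat' by blast
  then show False
    using assms(3) K K' by simp
qed

lemma hypercube_edge_in_lift:
  assumes "e \<in> edges (hypercube (length cols))"
  shows "\<exists>K\<in>lifts. e \<in> edges K"
proof -
  from assms obtain u w where e: "e = {u, w}" and u: "length u = length cols"
    and "length w = length cols" "hamming u w = 1"
    by auto
  then obtain d where d: "d < length cols" and w: "w = flip u d"
    using hamming_eq_1_imp_flip by metis
  let ?c = "cols ! d"
  have "syndrome cols u < 2 ^ m"
    using syndrome_less cols_less by blast
  with d have "(d, {syndrome cols u, xor (syndrome cols u) ?c}) \<in> step_label cols ` steps W"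
    using cayley_edges_subset unfolding cayley_edges_def by blast
  then obtain \<sigma> ds j where pat: "(\<sigma>, ds) \<in> set W" and j: "j < length ds" and dj: "ds ! j = d"
    and label: "{cayley_walk cols \<sigma> ds j, cayley_walk cols \<sigma> ds (Suc j)}
                  = {syndrome cols u, xor (syndrome cols u) ?c}"
    by (auto simp: steps_def)
  obtain x where x: "length x = length cols" "e = {x, flip x d}"
    "syndrome cols x = cayley_walk cols \<sigma> ds j"
  proof (cases "cayley_walk cols \<sigma> ds j = syndrome cols u")
    case True
    then show thesis using that[of u] u e w by simp
  next
    case False
    then have "cayley_walk cols \<sigma> ds j = xor (syndrome cols u) ?c"
      using label by (auto simp: doubleton_eq_iff)
    then show thesis
      using that[of "flip u d"] u e w d by (simp add: syndrome_flip insert_commute)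
  qed
  define v where "v = walk x ds j"
  have v: "length v = length cols" "syndrome cols v = \<sigma>"
    using x pattern_less[OF pat] by (simp_all add: v_def syndrome_walk)
  have "walk v ds j = x" "walk v ds (Suc j) = flip x d"
    using distinct_pattern[OF pat] j dj by (simp_all add: v_def walk_Suc)
  then have "e \<in> edges (mapped_path (walk v ds) (length ds))"
    using x(2) j by auto
  moreover have "mapped_path (walk v ds) (length ds) \<in> lifts"
    using pat v unfolding lifts_def by blast
  ultimately show ?thesis by blast
qed

theorem path_graph_divides_hypercube: "graph_divides (path_graph k) (hypercube (length cols))"
  unfolding graph_divides_def
proof (intro exI conjI)
  show "\<forall>K\<in>lifts. subgraph K (hypercube (length cols)) \<and> graph_iso (path_graph k) K"
    using lift_subgraph_iso by blast
  show "\<forall>K\<in>lifts. \<forall>K'\<in>lifts. K \<noteq> K' \<longrightarrow> edges K \<inter> edges K' = {}"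
    using lifts_edge_disjoint by blast
  show "\<Union> (edges ` lifts) = edges (hypercube (length cols))"
    using lift_subgraph_iso hypercube_edge_in_lift unfolding subgraph_def by blast
qed

end

definition pattern_labels :: "nat list \<Rightarrow> pattern \<Rightarrow> (nat \<times> nat set) list" where
  "pattern_labels cols p = map (\<lambda>i. step_label cols (p, i)) [0..<length (snd p)]"

lemma set_concat_pattern_labels:
  "set (concat (map (pattern_labels cols) W)) = step_label cols ` steps W"
  by (auto simp: pattern_labels_def steps_def)

lemma inj_on_step_label_if_distinct:
  "distinct (concat (map (pattern_labels cols) W)) \<Longrightarrow> inj_on (step_label cols) (steps W)"
proof (induction W)
  case Nil
  then show ?case by (simp add: steps_def)
next
  case (Cons p W)
  have "steps (p # W) = {p} \<times> {..<length (snd p)} \<union> steps W"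
    by (auto simp: steps_def)
  moreover have "inj_on (step_label cols) ({p} \<times> {..<length (snd p)})"
    using Cons.prems by (auto simp: pattern_labels_def distinct_map inj_on_def)
  moreover have "step_label cols ` ({p} \<times> {..<length (snd p)}) = set (pattern_labels cols p)"
    by (auto simp: pattern_labels_def)
  then have "step_label cols ` ({p} \<times> {..<length (snd p)}) \<inter> step_label cols ` steps W = {}"
    using Cons.prems set_concat_pattern_labels[of cols W] by simp
  ultimately show ?case
    using Cons by (auto simp: inj_on_Un)
qed

lemma cayley_edges_eq_set:
  "cayley_edges cols m = set [(d, {\<sigma>, xor \<sigma> (cols ! d)}). d \<leftarrow> [0..<length cols], \<sigma> \<leftarrow> [0..<2 ^ m]]"
  by (auto simp: cayley_edges_def)

lemma path_liftingI:
  assumes "\<forall>c\<in>set cols. c \<noteq> 0 \<and> c < 2 ^ m"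
    and "\<forall>(\<sigma>, ds)\<in>set W. length ds = k \<and> distinct ds \<and> (\<forall>d\<in>set ds. d < length cols)"
    and "distinct (concat (map (pattern_labels cols) W))"
    and "set [(d, {\<sigma>, xor \<sigma> (cols ! d)}). d \<leftarrow> [0..<length cols], \<sigma> \<leftarrow> [0..<2 ^ m]]
           \<subseteq> set (concat (map (pattern_labels cols) W))"
  shows "path_lifting cols m k W"
proof -
  have "cayley_edges cols m \<subseteq> step_label cols ` steps W"
    using assms(4) by (simp only: cayley_edges_eq_set set_concat_pattern_labels)
  with assms(1,2) inj_on_step_label_if_distinct[OF assms(3)] show ?thesis
    by unfold_locales fastforce+
qed

definition cols5 :: "nat list" where "cols5 = [1, 2, 4, 3, 5]"
definition patterns5 :: "pattern list" where
  "patterns5 = [(6, [1, 2, 4, 3]), (0, [0, 1, 2, 3]), (1, [3, 0, 4, 2]), (7, [1, 2, 4, 0]),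
    (3, [3, 1, 4, 0])]"

definition cols7 :: "nat list" where "cols7 = [1, 2, 3, 4, 5, 6, 7]"
definition patterns7 :: "pattern list" where
  "patterns7 = [(6, [6, 3, 0, 4]), (7, [3, 2, 5, 1]), (3, [6, 2, 4, 1]), (1, [2, 3, 4, 0]),
    (1, [5, 1, 4, 6]), (4, [3, 0, 1, 5]), (7, [0, 2, 6, 5])]"

definition cols9 :: "nat list" where "cols9 = [1, 2, 4, 8, 3, 5, 6, 9, 10]"
definition patterns9 :: "pattern list" where
  "patterns9 = [(15, [0, 2, 5, 8, 1, 7, 4, 6]), (7, [6, 8, 0, 3, 2, 1, 4, 5]),
    (1, [3, 8, 0, 4, 7, 2, 6, 1]), (4, [6, 8, 5, 1, 3, 2, 7, 4]), (13, [7, 8, 5, 4, 3, 0, 1, 6]),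
    (14, [3, 0, 8, 2, 6, 7, 4, 5]), (5, [0, 2, 6, 5, 4, 1, 7, 3]), (12, [7, 3, 0, 4, 2, 1, 5, 8]),
    (5, [2, 5, 3, 1, 6, 0, 7, 8])]"

definition cols11 :: "nat list" where "cols11 = [1, 2, 4, 8, 3, 5, 6, 9, 10, 12, 7]"
definition patterns11 :: "pattern list" where
  "patterns11 = [(9, [4, 8, 5, 0, 9, 7, 3, 2]), (4, [3, 8, 10, 2, 1, 6, 9, 5]),
    (11, [3, 4, 6, 1, 10, 5, 0, 7]), (1, [1, 2, 8, 3, 7, 4, 9, 0]), (10, [0, 2, 6, 5, 9, 3, 8, 4]),
    (15, [10, 6, 3, 4, 9, 1, 7, 5]), (6, [7, 1, 4, 10, 0, 2, 6, 9]), (12, [0, 7, 6, 10, 8, 5, 3, 1]),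
    (6, [2, 9, 5, 6, 10, 1, 4, 8]), (4, [8, 0, 3, 9, 10, 1, 2, 7]), (4, [2, 10, 4, 5, 0, 7, 8, 6])]"

interpretation Q5: path_lifting cols5 3 4 patterns5
  by (rule path_liftingI; code_simp)

interpretation Q7: path_lifting cols7 3 4 patterns7
  by (rule path_liftingI; code_simp)

interpretation Q9: path_lifting cols9 4 8 patterns9
  by (rule path_liftingI; code_simp)

interpretation Q11: path_lifting cols11 4 8 patterns11
  by (rule path_liftingI; code_simp)

theorem proposition5:
  shows "graph_divides (path_graph 4) (hypercube 5) \<and>
         graph_divides (path_graph 4) (hypercube 7) \<and>
         graph_divides (path_graph 8) (hypercube 9) \<and>
         graph_divides (path_graph 8) (hypercube 11)"
proof -
  have "length cols5 = 5" "length cols7 = 7" "length cols9 = 9" "length cols11 = 11"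
    by (simp_all add: cols5_def cols7_def cols9_def cols11_def)
  then show ?thesis
    using Q5.path_graph_divides_hypercube Q7.path_graph_divides_hypercube
      Q9.path_graph_divides_hypercube Q11.path_graph_divides_hypercube
    by simp
qed

end
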